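(* \textsf{SpecRel} $\vdash$ the following sentence: for all bodies $o,o'$ and all $\bar x,\bar x',\bar y,\bar y'\in Q^4$, if $\mathsf{IOb}(o)$, $\mathsf{IOb}(o')$, $\forall b\,(\mathsf{W}(o,b,\bar x)\leftrightarrow\mathsf{W}(o',b,\bar x'))$ and $\forall b\,(\mathsf{W}(o,b,\bar y)\leftrightarrow\mathsf{W}(o',b,\bar y'))$, then $\mu(\bar x,\bar y)=\mu(\bar x',\bar y')$, where $\mu(\bar x,\bar y):=(x_1-y_1)^2+(x_2-y_2)^2+(x_3-y_3)^2-(x_4-y_4)^2$. Here $\vdash$ denotes derivability in a standard proof system of first-order logic.
   Context: Two-sorted first-order language $\{B,\mathsf{IB},\mathsf{Ph},Q,+,\cdot,<,\mathsf{W}\}$: sorts $B$ (bodies) and $Q$ (quantities); $\mathsf{IB},\mathsf{Ph}$ unary relations on $B$ (inertial bodies, photons); $+,\cdot$ binary functions and $<$ binary relation on $Q$; $\mathsf{W}$ a 6-ary relation of sort $B\,B\,Q\,Q\,Q\,Q$ ($\mathsf{W}(o,b,x,y,z,t)$: observer $o$ coordinatizes body $b$ at $\langle x,y,z,t\rangle$). Bars denote 4-tuples of $Q$-variables. Defined: $\mathsf{Ob}(o):\iff\exists b\,\bar x\ \mathsf{W}(o,b,\bar x)$; $\mathsf{IOb}(o):\iff \mathsf{IB}(o)\wedge\mathsf{Ob}(o)$. \textsf{SpecRel} consists of the axioms: AxField: $\langle Q;+,\cdot,<\rangle$ is a linearly ordered field (with zero $0$). AxSelf: $\forall o\,x y z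 t\ \mathsf{IOb}(o)\to(\mathsf{W}(o,o,x,y,z,t)\leftrightarrow x=y=z=0)$. AxPh: $\forall o\,\bar x\,\bar x'\ \mathsf{IOb}(o)\to\big(\exists p(\mathsf{Ph}(p)\wedge\mathsf{W}(o,p,\bar x)\wedge\mathsf{W}(o,p,\bar x'))\leftrightarrow (x_1-x'_1)^2+(x_2-x'_2)^2+(x_3-x'_3)^2=(x_4-x'_4)^2\big)$. AxEv: $\forall o\,o'\,\bar x\ \mathsf{IOb}(o)\wedge\mathsf{IOb}(o')\to\exists\bar x'\,\forall b\ (\mathsf{W}(o,b,\bar x)\leftrightarrow\mathsf{W}(o',b,\bar x'))$. AxSymd: for all $o,o',\bar x,\bar x',\bar y,\bar y'$: if $\mathsf{IOb}(o)$, $\mathsf{IOb}(o')$, $x_4=y_4$, $x'_4=y'_4$, $\forall b(\mathsf{W}(o,b,\bar x)\leftrightarrow\mathsf{W}(o',b,\bar x'))$ and $\forall b(\mathsf{W}(o,b,\bar y)\leftrightarrow\mathsf{W}(o',b,\bar y'))$, then $(x_1-y_1)^2+(x_2-y_2)^2+(x_3-y_3)^2=(x'_1-y'_1)^2+(x'_2-y'_2)^2+(x'_3-y'_3)^2$. *)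

theory Defs
  imports Main
begin

text \<open>A model of the language: bodies of type 'b, quantities of type 'q (a linearly
ordered field, which is AxField, given by the type class), unary relations IB, Ph
on bodies, and the 6-ary world-view relation W.\<close>

definition Ob :: "('b \<Rightarrow> 'b \<Rightarrow> 'q \<Rightarrow> 'q \<Rightarrow> 'q \<Rightarrow> 'q \<Rightarrow> bool) \<Rightarrow> 'b \<Rightarrow> bool" where
  "Ob W ob \<longleftrightarrow> (\<exists>b x y z t. W ob b x y z t)"

definition IOb :: "('b \<Rightarrow> bool) \<Rightarrow> ('b \<Rightarrow> 'b \<Rightarrow> 'q \<Rightarrow> 'q \<Rightarrow> 'q \<Rightarrow> 'q \<Rightarrow> bool) \<Rightarrow> 'b \<Rightarrow> bool" where
  "IOb IB W ob \<longleftrightarrow> IB ob \<and> Ob W ob"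

definition AxSelf :: "('b \<Rightarrow> bool) \<Rightarrow> ('b \<Rightarrow> 'b \<Rightarrow> 'q::linordered_field \<Rightarrow> 'q \<Rightarrow> 'q \<Rightarrow> 'q \<Rightarrow> bool) \<Rightarrow> bool" where
  "AxSelf IB W \<longleftrightarrow> (\<forall>ob x y z t. IOb IB W ob \<longrightarrow> (W ob ob x y z t \<longleftrightarrow> x = 0 \<and> y = 0 \<and> z = 0))"

definition AxPh :: "('b \<Rightarrow> bool) \<Rightarrow> ('b \<Rightarrow> bool) \<Rightarrow> ('b \<Rightarrow> 'b \<Rightarrow> 'q::linordered_field \<Rightarrow> 'q \<Rightarrow> 'q \<Rightarrow> 'q \<Rightarrow> bool) \<Rightarrow> bool" where
  "AxPh IB Ph W \<longleftrightarrow> (\<forall>ob x1 x2 x3 x4 x1' x2' x3' x4'. IOb IB W ob \<longrightarrow>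
     ((\<exists>p. Ph p \<and> W ob p x1 x2 x3 x4 \<and> W ob p x1' x2' x3' x4') \<longleftrightarrow>
      (x1 - x1')^2 + (x2 - x2')^2 + (x3 - x3')^2 = (x4 - x4')^2))"

definition AxEv :: "('b \<Rightarrow> bool) \<Rightarrow> ('b \<Rightarrow> 'b \<Rightarrow> 'q \<Rightarrow> 'q \<Rightarrow> 'q \<Rightarrow> 'q \<Rightarrow> bool) \<Rightarrow> bool" where
  "AxEv IB W \<longleftrightarrow> (\<forall>ob ob' x1 x2 x3 x4. IOb IB W ob \<and> IOb IB W ob' \<longrightarrow>
     (\<exists>x1' x2' x3' x4'. \<forall>b. W ob b x1 x2 x3 x4 \<longleftrightarrow> W ob' b x1' x2' x3' x4'))"

definition AxSymd :: "('b \<Rightarrow> bool) \<Rightarrow> ('b \<Rightarrow> 'b \<Rightarrow> 'q::linordered_field \<Rightarrow> 'q \<Rightarrow> 'q \<Rightarrow> 'q \<Rightarrow> bool) \<Rightarrow> bool" where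
  "AxSymd IB W \<longleftrightarrow> (\<forall>ob ob' x1 x2 x3 x4 x1' x2' x3' x4' y1 y2 y3 y4 y1' y2' y3' y4'.
     IOb IB W ob \<and> IOb IB W ob' \<and> x4 = y4 \<and> x4' = y4' \<and>
     (\<forall>b. W ob b x1 x2 x3 x4 \<longleftrightarrow> W ob' b x1' x2' x3' x4') \<and>
     (\<forall>b. W ob b y1 y2 y3 y4 \<longleftrightarrow> W ob' b y1' y2' y3' y4') \<longrightarrow>
     (x1 - y1)^2 + (x2 - y2)^2 + (x3 - y3)^2 = (x1' - y1')^2 + (x2' - y2')^2 + (x3' - y3')^2)"

definition SpecRel :: "('b \<Rightarrow> bool) \<Rightarrow> ('b \<Rightarrow> bool) \<Rightarrow> ('b \<Rightarrow> 'b \<Rightarrow> 'q::linordered_field \<Rightarrow> 'q \<Rightarrow> 'q \<Rightarrow> 'q \<Rightarrow> bool) \<Rightarrow> bool" where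
  "SpecRel IB Ph W \<longleftrightarrow> AxSelf IB W \<and> AxPh IB Ph W \<and> AxEv IB W \<and> AxSymd IB W"

definition mu :: "'q::linordered_field \<Rightarrow> 'q \<Rightarrow> 'q \<Rightarrow> 'q \<Rightarrow> 'q \<Rightarrow> 'q \<Rightarrow> 'q \<Rightarrow> 'q \<Rightarrow> 'q" where
  "mu x1 x2 x3 x4 y1 y2 y3 y4 = (x1 - y1)^2 + (x2 - y2)^2 + (x3 - y3)^2 - (x4 - y4)^2"

end

theory Submission
  imports Defs
begin

(* Coordinatize events as vectors of Q^4 with the Minkowski form
   msq x = x1^2 + x2^2 + x3^2 - x4^2.  By AxPh an observer's photons see exactly
   the lightlike pairs of events; since distinct events differ in their light
   cones, AxEv yields for two inertial observers a bijective world-view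
   transformation f of Q^4 which preserves lightlikeness in both directions,
   and by AxSymd it preserves spatial distances of events that are simultaneous
   for both observers.  This is an
   Alexandrov-Zeeman type argument over an arbitrary ordered field:
   light cones determine null hyperplanes, so f moves along null vectors by
   translation, hence Phi = f - f 0 is additive; along each null direction Phi
   is semilinear with one common field endomorphism, which AxSymd forces to be
   the identity; finally a linear map sending the light cone into itself is
   conformal, and AxSymd fixes the conformal factor to be 1. *)

section \<open>Minkowski space over an ordered field\<close>

text \<open>Events are 4-tuples of quantities; the fourth coordinate is time.\<close>

datatype 'a v4 = V (c1: 'a) (c2: 'a) (c3: 'a) (c4: 'a)

instantiation v4 :: (ab_group_add) ab_group_add
begin
definition "zero_v4 = V 0 0 0 0"
definition "plus_v4 x y = V (c1 x + c1 y) (c2 x + c2 y) (c3 x + c3 y) (c4 x + c4 y)"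
definition "minus_v4 x y = V (c1 x - c1 y) (c2 x - c2 y) (c3 x - c3 y) (c4 x - c4 y)"
definition "uminus_v4 x = V (- c1 x) (- c2 x) (- c3 x) (- c4 x)"
instance
  by standard (auto simp: zero_v4_def plus_v4_def minus_v4_def uminus_v4_def v4.expand algebra_simps)
end

lemma v4_comps[simp]:
  "c1 (x + y) = c1 x + c1 y" "c2 (x + y) = c2 x + c2 y" "c3 (x + y) = c3 x + c3 y" "c4 (x + y) = c4 x + c4 y"
  "c1 (x - y) = c1 x - c1 y" "c2 (x - y) = c2 x - c2 y" "c3 (x - y) = c3 x - c3 y" "c4 (x - y) = c4 x - c4 y"
  "c1 (- x) = - c1 x" "c2 (- x) = - c2 x" "c3 (- x) = - c3 x" "c4 (- x) = - c4 x"
  "c1 0 = 0" "c2 0 = 0" "c3 0 = 0" "c4 0 = 0"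
  by (simp_all add: zero_v4_def plus_v4_def minus_v4_def uminus_v4_def)

lemma v4_eq_iff: "x = y \<longleftrightarrow> c1 x = c1 y \<and> c2 x = c2 y \<and> c3 x = c3 y \<and> c4 x = c4 y"
  by (auto simp: v4.expand)

definition smul :: "'a::field \<Rightarrow> 'a v4 \<Rightarrow> 'a v4" where
  "smul t x = V (t * c1 x) (t * c2 x) (t * c3 x) (t * c4 x)"

lemma smul_comps[simp]: "c1 (smul t x) = t * c1 x" "c2 (smul t x) = t * c2 x"
  "c3 (smul t x) = t * c3 x" "c4 (smul t x) = t * c4 x"
  by (simp_all add: smul_def)

lemma smul_zero[simp]: "smul t 0 = 0" "smul 0 x = 0" by (simp_all add: v4_eq_iff)
lemma smul_one[simp]: "smul 1 x = x" by (simp add: v4_eq_iff)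
lemma smul_add_left: "smul (s + t) x = smul s x + smul t x" by (simp add: v4_eq_iff algebra_simps)
lemma smul_add_right: "smul s (x + y) = smul s x + smul s y" by (simp add: v4_eq_iff algebra_simps)
lemma smul_diff_left: "smul (s - t) x = smul s x - smul t x" by (simp add: v4_eq_iff algebra_simps)
lemma smul_smul: "smul s (smul t x) = smul (s * t) x" by (simp add: v4_eq_iff algebra_simps)

lemma smul_cancel:
  fixes v :: "'a::field v4"
  assumes "v \<noteq> 0" "smul s v = smul s' v" shows "s = s'"
proof -
  from assms(2) have "smul (s - s') v = 0" by (simp add: smul_diff_left)
  then have "(s - s') * c1 v = 0 \<and> (s - s') * c2 v = 0 \<and> (s - s') * c3 v = 0 \<and> (s - s') * c4 v = 0"
    by (simp add: v4_eq_iff)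
  with assms(1) show ?thesis by (auto simp: v4_eq_iff)
qed

definition minner :: "'a::field v4 \<Rightarrow> 'a v4 \<Rightarrow> 'a" where
  "minner x y = c1 x * c1 y + c2 x * c2 y + c3 x * c3 y - c4 x * c4 y"

definition msq :: "'a::field v4 \<Rightarrow> 'a" where
  "msq x = minner x x"

definition lightlike :: "'a::field v4 \<Rightarrow> 'a v4 \<Rightarrow> bool" where
  "lightlike x y \<longleftrightarrow> msq (x - y) = 0"

lemma minner_sym: "minner x y = minner y x" by (simp add: minner_def algebra_simps)
lemma minner_add_left: "minner (x + y) z = minner x z + minner y z" by (simp add: minner_def algebra_simps)
lemma minner_diff_left: "minner (x - y) z = minner x z - minner y z" by (simp add: minner_def algebra_simps)
lemma minner_smul_left: "minner (smul t x) z = t * minner x z" by (simp add: minner_def algebra_simps)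
lemma minner_smul_right: "minner z (smul t x) = t * minner z x" by (simp add: minner_def algebra_simps)
lemma minner_zero[simp]: "minner 0 x = 0" "minner x 0 = 0" by (simp_all add: minner_def)

lemma msq_diff: "msq (x - y) = msq x - 2 * minner x y + msq y"
  unfolding msq_def minner_def by (simp, algebra)

lemma msq_smul: "msq (smul t x) = t^2 * msq x"
  unfolding msq_def minner_def by (simp add: power2_eq_square, algebra)

lemma msq_neg[simp]: "msq (- x) = msq x"
  by (simp add: msq_def minner_def)

lemma msq_minus_comm: "msq (x - y) = msq (y - x)"
  by (simp add: msq_def minner_def algebra_simps)

lemma lightlike_iff:
  "lightlike x y \<longleftrightarrow> (c1 x - c1 y)^2 + (c2 x - c2 y)^2 + (c3 x - c3 y)^2 = (c4 x - c4 y)^2"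
  by (simp add: lightlike_def msq_def minner_def power2_eq_square algebra_simps)

lemma msq_comb4: "msq (smul a A + smul b B + smul c C + smul d D) =
  a^2 * msq A + b^2 * msq B + c^2 * msq C + d^2 * msq D + 2 * a * b * minner A B + 2 * a * c * minner A C
  + 2 * a * d * minner A D + 2 * b * c * minner B C + 2 * b * d * minner B D + 2 * c * d * minner C D"
  unfolding msq_def minner_def by (simp add: power2_eq_square algebra_simps)

section \<open>Geometry of null vectors\<close>

lemma sum_three_squares_zero:
  fixes a b c :: "'a::linordered_field"
  shows "a^2 + b^2 + c^2 = 0 \<Longrightarrow> a = 0 \<and> b = 0 \<and> c = 0"
  by (metis add_nonneg_nonneg power_zero_numeral sum_power2_eq_zero_iff zero_le_power2 add_nonneg_eq_0_iff)

lemma null_orthogonal_parallel: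
  fixes u v :: "'a::linordered_field v4"
  assumes "msq u = 0" "msq v = 0" "minner u v = 0" "u \<noteq> 0"
  shows "\<exists>t. v = smul t u"
proof -
  have c4u: "c4 u \<noteq> 0"
  proof
    assume "c4 u = 0"
    with assms(1) have "(c1 u)^2 + (c2 u)^2 + (c3 u)^2 = 0"
      by (simp add: msq_def minner_def power2_eq_square)
    then have "c1 u = 0 \<and> c2 u = 0 \<and> c3 u = 0" by (rule sum_three_squares_zero)
    with \<open>c4 u = 0\<close> assms(4) show False by (simp add: v4_eq_iff)
  qed
  define t where "t = c4 v / c4 u"
  have "(c1 v - t * c1 u)^2 + (c2 v - t * c2 u)^2 + (c3 v - t * c3 u)^2
      = ((c1 v)^2 + (c2 v)^2 + (c3 v)^2) - 2 * t * (c1 u * c1 v + c2 u * c2 v + c3 u * c3 v)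
        + t^2 * ((c1 u)^2 + (c2 u)^2 + (c3 u)^2)"
    by (simp add: algebra_simps power2_eq_square)
  also have "\<dots> = (c4 v)^2 - 2 * t * (c4 u * c4 v) + t^2 * (c4 u)^2"
    using assms(1-3) by (simp add: msq_def minner_def power2_eq_square algebra_simps)
  also have "\<dots> = (c4 v - t * c4 u)^2" by (simp add: algebra_simps power2_eq_square)
  also have "\<dots> = 0" using c4u by (simp add: t_def)
  finally have "c1 v - t * c1 u = 0 \<and> c2 v - t * c2 u = 0 \<and> c3 v - t * c3 u = 0"
    by (rule sum_three_squares_zero)
  moreover have "c4 v = t * c4 u" using c4u by (simp add: t_def)
  ultimately show ?thesis by (auto simp: v4_eq_iff)
qed

text \<open>A condition on z, a, b phrased purely by the lightlike relation.  For
  lightlike-separated a \<noteq> b it says that z lies in the null hyperplane through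
  a orthogonal to b - a (lemma null_hyperplane_iff below); this is how a map
  preserving light cones is seen to preserve null hyperplanes.\<close>

definition light_hyperplane :: "'a::field v4 \<Rightarrow> 'a v4 \<Rightarrow> 'a v4 \<Rightarrow> bool" where
  "light_hyperplane a b z \<longleftrightarrow>
     (lightlike z a \<and> lightlike z b) \<or> (\<forall>y. lightlike y a \<and> lightlike y b \<longrightarrow> \<not> lightlike z y)"

text \<open>If z is not on the null hyperplane, the line a + t (b - a) contains a point
  lightlike to z, which is also lightlike to a and b.\<close>

lemma light_hyperplane_orthogonal:
  fixes a b z :: "'a::linordered_field v4"
  assumes "lightlike a b" "light_hyperplane a b z"
  shows "minner (z - a) (b - a) = 0"
proof -
  define u where "u = b - a"
  define w where "w = z - a"
  have Qu: "msq u = 0" using assms(1) by (simp add: lightlike_def u_def msq_minus_comm)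
  show ?thesis
  proof (cases "lightlike z a \<and> lightlike z b")
    case True
    then have "msq w = 0" "msq (w - u) = 0" by (simp_all add: lightlike_def w_def u_def)
    then have "2 * minner w u = 0" using Qu by (simp add: msq_diff)
    then show ?thesis by (simp add: w_def u_def)
  next
    case False
    with assms(2) have no_common: "\<forall>y. lightlike y a \<and> lightlike y b \<longrightarrow> \<not> lightlike z y"
      by (simp add: light_hyperplane_def)
    show ?thesis
    proof (rule ccontr)
      assume "minner (z - a) (b - a) \<noteq> 0"
      then have wu: "minner w u \<noteq> 0" by (simp add: w_def u_def)
      define t where "t = msq w / (2 * minner w u)"
      define y where "y = a + smul t u"
      have ya: "lightlike y a" using Qu by (simp add: lightlike_def y_def msq_smul)
      have "y - b = smul (t - 1) u" by (simp add: y_def u_def v4_eq_iff algebra_simps)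
      then have yb: "lightlike y b" using Qu by (simp add: lightlike_def msq_smul)
      have "z - y = w - smul t u" by (simp add: y_def w_def v4_eq_iff algebra_simps)
      then have "lightlike z y" using Qu wu
        by (simp add: lightlike_def msq_diff msq_smul minner_smul_right t_def)
      with ya yb no_common show False by blast
    qed
  qed
qed

text \<open>Conversely, a point of the null hyperplane that is not on the light cone of
  a is lightlike to no common light-cone point of a and b, since those lie on the
  null line through a and b.\<close>

lemma orthogonal_light_hyperplane:
  fixes a b z :: "'a::linordered_field v4"
  assumes "lightlike a b" "a \<noteq> b" "minner (z - a) (b - a) = 0"
  shows "light_hyperplane a b z"
proof -
  define u where "u = b - a"
  define w where "w = z - a"
  have Qu: "msq u = 0" using assms(1) by (simp add: lightlike_def u_def msq_minus_comm)
  have unz: "u \<noteq> 0" using assms(2) by (simp add: u_def)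
  have wu: "minner w u = 0" using assms(3) by (simp add: w_def u_def)
  show ?thesis
  proof (cases "msq w = 0")
    case True
    then have "msq (w - u) = 0" using wu Qu by (simp add: msq_diff)
    with True show ?thesis by (simp add: light_hyperplane_def lightlike_def w_def u_def)
  next
    case False
    have "\<not> lightlike z y" if "lightlike y a" "lightlike y b" for y
    proof -
      define v where "v = y - a"
      have Qv: "msq v = 0" using that(1) by (simp add: lightlike_def v_def)
      have "y - b = v - u" by (simp add: v_def u_def)
      then have "msq (v - u) = 0" using that(2) by (simp add: lightlike_def)
      then have "minner u v = 0" using Qv Qu by (simp add: msq_diff minner_sym)
      then obtain t where "v = smul t u" using null_orthogonal_parallel[OF Qu Qv _ unz] by blast
      then have "minner w v = 0" using wu by (simp add: minner_smul_right)
      moreover have "z - y = w - v" by (simp add: w_def v_def)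
      ultimately show ?thesis using False Qv by (simp add: lightlike_def msq_diff)
    qed
    then show ?thesis by (simp add: light_hyperplane_def)
  qed
qed

lemma null_hyperplane_iff:
  fixes a b z :: "'a::linordered_field v4"
  assumes "lightlike a b" "a \<noteq> b"
  shows "light_hyperplane a b z \<longleftrightarrow> minner (z - a) (b - a) = 0"
  using light_hyperplane_orthogonal[OF assms(1)] orthogonal_light_hyperplane[OF assms] by blast

definition n1 :: "'a::linordered_field v4" where "n1 = V 1 0 0 1"
definition n2 :: "'a::linordered_field v4" where "n2 = V (-1) 0 0 1"
definition n3 :: "'a::linordered_field v4" where "n3 = V 0 1 0 1"
definition n4 :: "'a::linordered_field v4" where "n4 = V 0 0 1 1"

lemma null_basis: "msq n1 = 0" "msq n2 = 0" "msq n3 = 0" "msq n4 = 0"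
  "n1 \<noteq> 0" "n2 \<noteq> 0" "n3 \<noteq> 0" "n4 \<noteq> 0"
  by (simp_all add: n1_def n2_def n3_def n4_def msq_def minner_def v4_eq_iff)

lemma msq_smul_null_basis:
  "msq (smul t n1) = 0" "msq (smul t n2) = 0" "msq (smul t n3) = 0" "msq (smul t n4) = 0"
  by (simp_all add: msq_smul null_basis)

definition nb1 :: "'a::linordered_field v4 \<Rightarrow> 'a" where "nb1 x = (c1 x + c4 x - c2 x - c3 x) / 2"
definition nb2 :: "'a::linordered_field v4 \<Rightarrow> 'a" where "nb2 x = (c4 x - c2 x - c3 x - c1 x) / 2"

lemma null_basis_decomp: "x = smul (nb1 x) n1 + smul (nb2 x) n2 + smul (c2 x) n3 + smul (c3 x) n4"
  by (simp add: v4_eq_iff nb1_def nb2_def n1_def n2_def n3_def n4_def field_simps)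

text \<open>A nonzero null vector is orthogonal to at most one of n1, n2, n3; so it is
  non-orthogonal to two of them, and these two are mutually non-orthogonal.\<close>

lemma null_nonorthogonal_pair:
  fixes u :: "'a::linordered_field v4"
  assumes Qu: "msq u = 0" and unz: "u \<noteq> 0"
  shows "(minner u n2 \<noteq> 0 \<and> minner u n3 \<noteq> 0) \<or> (minner u n1 \<noteq> 0 \<and> minner u n3 \<noteq> 0)
       \<or> (minner u n1 \<noteq> 0 \<and> minner u n2 \<noteq> 0)"
proof -
  have ip1: "minner u n1 = c1 u - c4 u" and ip2: "minner u n2 = - c1 u - c4 u"
    and ip3: "minner u n3 = c2 u - c4 u"
    by (simp_all add: minner_def n1_def n2_def n3_def)
  have cone: "(c1 u)^2 + (c2 u)^2 + (c3 u)^2 = (c4 u)^2"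
    using Qu by (simp add: msq_def minner_def power2_eq_square)
  have nonzero: "\<not> (c1 u = 0 \<and> c2 u = 0 \<and> c3 u = 0 \<and> c4 u = 0)"
    using unz by (simp add: v4_eq_iff)
  have "minner u n1 \<noteq> 0 \<or> minner u n2 \<noteq> 0"
    using ip1 ip2 cone nonzero by (auto simp: sum_power2_eq_zero_iff)
  moreover have "minner u n1 \<noteq> 0 \<or> minner u n3 \<noteq> 0"
    using ip1 ip3 cone nonzero by (auto simp: sum_power2_eq_zero_iff)
  moreover have "minner u n2 \<noteq> 0 \<or> minner u n3 \<noteq> 0"
    using ip2 ip3 cone nonzero by (auto simp: sum_power2_eq_zero_iff)
  ultimately show ?thesis by blast
qed

text \<open>Events are determined by their light cones: if every event lightlike to x is
  lightlike to y, then y - x is orthogonal to every null vector, hence zero.\<close>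

lemma cone_inclusion_orthogonal:
  fixes x y v :: "'a::linordered_field v4"
  assumes Qv: "msq v = 0" and cone: "\<forall>z. lightlike x z \<longrightarrow> lightlike y z"
  shows "minner (y - x) v = 0"
proof -
  have "lightlike y (x + smul t v)" for t
    using cone Qv by (simp add: lightlike_def msq_smul)
  then have "msq ((y - x) - smul t v) = 0" for t by (simp add: lightlike_def algebra_simps)
  then have "msq (y - x) - 2 * t * minner (y - x) v = 0" for t
    using Qv by (simp add: msq_diff msq_smul minner_smul_right mult.assoc)
  from this[of 1] this[of 2] show ?thesis by simp
qed

lemma lightlike_separates:
  fixes x y :: "'a::linordered_field v4"
  assumes "x \<noteq> y" shows "\<exists>z. lightlike x z \<and> \<not> lightlike y z"
proof (rule ccontr)
  assume "\<not> ?thesis"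
  then have cone: "\<forall>z. lightlike x z \<longrightarrow> lightlike y z" by blast
  have "minner (y - x) n1 = 0" "minner (y - x) n2 = 0" "minner (y - x) n3 = 0" "minner (y - x) n4 = 0"
    using cone_inclusion_orthogonal[OF _ cone] null_basis by blast+
  then have "y = x" by (simp add: minner_def n1_def n2_def n3_def n4_def v4_eq_iff)
  with assms show False by simp
qed

text \<open>Testing the hypothesis on
  nine explicit null vectors (coordinates 0, 1, -1, 3/5, 4/5) shows that the
  images of the standard basis are pairwise orthogonal with squares c, c, c, -c.\<close>

lemma linear_null_preserving_conformal:
  fixes E1 E2 E3 E4 :: "'a::linordered_field v4"
  assumes lin: "\<And>x. g x = smul (c1 x) E1 + smul (c2 x) E2 + smul (c3 x) E3 + smul (c4 x) E4"
    and null: "\<And>v. msq v = 0 \<Longrightarrow> msq (g v) = 0"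
  shows "msq (g x) = msq E1 * msq x"
proof -
  have X: "msq v = 0 \<Longrightarrow> (c1 v)^2 * msq E1 + (c2 v)^2 * msq E2 + (c3 v)^2 * msq E3 + (c4 v)^2 * msq E4
      + 2 * c1 v * c2 v * minner E1 E2 + 2 * c1 v * c3 v * minner E1 E3 + 2 * c1 v * c4 v * minner E1 E4
      + 2 * c2 v * c3 v * minner E2 E3 + 2 * c2 v * c4 v * minner E2 E4 + 2 * c3 v * c4 v * minner E3 E4 = 0"
    for v using null[of v] by (simp add: lin msq_comb4)
  note tests = X[of "V 1 0 0 1"] X[of "V 1 0 0 (-1)"] X[of "V 0 1 0 1"] X[of "V 0 1 0 (-1)"]
    X[of "V 0 0 1 1"] X[of "V 0 0 1 (-1)"] X[of "V (3/5) (4/5) 0 1"] X[of "V (3/5) 0 (4/5) 1"]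
    X[of "V 0 (3/5) (4/5) 1"]
  have "minner E1 E4 = 0" "minner E2 E4 = 0" "minner E3 E4 = 0"
    "msq E2 = msq E1" "msq E3 = msq E1" "msq E4 = - msq E1"
    "minner E1 E2 = 0" "minner E1 E3 = 0" "minner E2 E3 = 0"
    using tests by (simp_all add: msq_def[of "V _ _ _ _"] minner_def[of "V _ _ _ _" "V _ _ _ _"]
        power2_eq_square)
  then show ?thesis
    unfolding lin msq_comb4 by (simp add: msq_def[of x] minner_def[of x] power2_eq_square algebra_simps)
qed

section \<open>Maps preserving light cones and simultaneous distances are isometries\<close>

text \<open>The abstract properties of a world-view transformation under SpecRel:
  a bijection of Q^4 preserving the lightlike relation in both directions and
  preserving spatial distances of pairs of events simultaneous before and after
  the map (for such pairs msq is the squared spatial distance).\<close>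

locale worldview_map =
  fixes f :: "'a::linordered_field v4 \<Rightarrow> 'a v4"
  assumes inj: "f x = f y \<Longrightarrow> x = y"
    and surj: "\<exists>x. f x = y"
    and lightlike_image: "lightlike (f x) (f y) \<longleftrightarrow> lightlike x y"
    and simultaneous_msq: "c4 x = c4 y \<Longrightarrow> c4 (f x) = c4 (f y) \<Longrightarrow> msq (f x - f y) = msq (x - y)"
begin

text \<open>The light-cone condition light_hyperplane is invariant under f, as f is onto.\<close>

lemma light_hyperplane_image: "light_hyperplane (f a) (f b) (f z) \<longleftrightarrow> light_hyperplane a b z"
proof -
  have "(\<forall>y. lightlike y (f a) \<and> lightlike y (f b) \<longrightarrow> \<not> lightlike (f z) y) \<longleftrightarrow>
        (\<forall>y. lightlike (f y) (f a) \<and> lightlike (f y) (f b) \<longrightarrow> \<not> lightlike (f z) (f y))"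
    by (metis surj)
  then show ?thesis by (simp add: light_hyperplane_def lightlike_image)
qed

lemma null_hyperplane_preserved:
  assumes "lightlike a b" "a \<noteq> b"
  shows "minner (z - a) (b - a) = 0 \<longleftrightarrow> minner (f z - f a) (f b - f a) = 0"
proof -
  have "lightlike (f a) (f b)" using assms(1) lightlike_image by simp
  moreover have "f a \<noteq> f b" using assms(2) inj by blast
  ultimately show ?thesis
    using null_hyperplane_iff[OF assms] null_hyperplane_iff light_hyperplane_image by metis
qed

definition Phi :: "'a v4 \<Rightarrow> 'a v4" where
  "Phi x = f x - f 0"

lemma Phi_0[simp]: "Phi 0 = 0" by (simp add: Phi_def)

lemma Phi_null: "msq m = 0 \<Longrightarrow> msq (Phi m) = 0"
  using lightlike_image[of m 0] by (simp add: Phi_def lightlike_def)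

lemma Phi_nonzero: "m \<noteq> 0 \<Longrightarrow> Phi m \<noteq> 0"
  using inj[of m 0] by (auto simp: Phi_def)

lemma null_hyperplane_preserved_0:
  "msq m = 0 \<Longrightarrow> m \<noteq> 0 \<Longrightarrow> minner z m = 0 \<longleftrightarrow> minner (Phi z) (Phi m) = 0"
  using null_hyperplane_preserved[of 0 m z] by (simp add: lightlike_def Phi_def)

lemma null_hyperplane_preserved_at:
  "msq m = 0 \<Longrightarrow> m \<noteq> 0 \<Longrightarrow> minner (z - y) m = 0 \<longleftrightarrow> minner (f z - f y) (f (y + m) - f y) = 0"
  using null_hyperplane_preserved[of y "y + m" z] by (simp add: lightlike_def)

text \<open>If y lies on the
  null hyperplane through 0 orthogonal to m this is immediate; otherwise a point z
  chosen on that hyperplane and on the image hyperplane through y would yield a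
  contradiction.\<close>

lemma null_step_orthogonal:
  assumes Qm: "msq m = 0" and mnz: "m \<noteq> 0"
  shows "minner (f (y + m) - f y) (Phi m) = 0"
proof (cases "minner y m = 0")
  case True
  then have "minner (Phi y) (Phi m) = 0" using null_hyperplane_preserved_0[OF Qm mnz] by simp
  moreover have "minner (y + m) m = 0" using True Qm by (simp add: minner_add_left msq_def)
  then have "minner (Phi (y + m)) (Phi m) = 0" using null_hyperplane_preserved_0[OF Qm mnz] by simp
  moreover have "f (y + m) - f y = Phi (y + m) - Phi y" by (simp add: Phi_def)
  ultimately show ?thesis by (simp add: minner_diff_left)
next
  case False
  show ?thesis
  proof (rule ccontr)
    define N where "N = f (y + m) - f y"
    assume "minner (f (y + m) - f y) (Phi m) \<noteq> 0"
    then have c: "minner N (Phi m) \<noteq> 0" by (simp add: N_def)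
    define \<beta> where "\<beta> = minner (f y - f 0) N / minner N (Phi m)"
    obtain z where z: "f z = f 0 + smul \<beta> (Phi m)" using surj by metis
    have "minner (Phi z) (Phi m) = 0" using Phi_null[OF Qm] z
      by (simp add: Phi_def minner_smul_left msq_def)
    then have z_perp: "minner z m = 0" using null_hyperplane_preserved_0[OF Qm mnz] by simp
    have z_step: "f z - f y = smul \<beta> (Phi m) - (f y - f 0)" using z by simp
    have "minner (f z - f y) N = \<beta> * minner N (Phi m) - minner (f y - f 0) N"
      unfolding z_step by (simp add: minner_diff_left minner_smul_left minner_sym[of "Phi m"])
    then have "minner (f z - f y) N = 0" using c by (simp add: \<beta>_def)
    then have zy_perp: "minner (z - y) m = 0" using null_hyperplane_preserved_at[OF Qm mnz] by (simp add: N_def)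
    have "minner y m = minner z m - minner (z - y) m" by (simp add: minner_diff_left)
    with z_perp zy_perp False show False by simp
  qed
qed

lemma null_step_parallel:
  assumes Qm: "msq m = 0" and mnz: "m \<noteq> 0"
  shows "\<exists>k. f (y + m) - f y = smul k (Phi m) \<and> k \<noteq> 0"
proof -
  have "msq (f (y + m) - f y) = 0" using lightlike_image[of "y + m" y] Qm by (simp add: lightlike_def)
  then obtain k where k: "f (y + m) - f y = smul k (Phi m)"
    using null_orthogonal_parallel[OF Phi_null[OF Qm] _ _ Phi_nonzero[OF mnz]]
      null_step_orthogonal[OF Qm mnz] minner_sym by metis
  have "f (y + m) \<noteq> f y" using inj[of "y + m" y] mnz by auto
  then have "k \<noteq> 0" using k by auto
  with k show ?thesis by blast
qed

lemma null_hyperplane_Phi: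
  assumes Qm: "msq m = 0" and mnz: "m \<noteq> 0"
  shows "minner (x - y) m = 0 \<longleftrightarrow> minner (f x - f y) (Phi m) = 0"
proof -
  obtain k where k: "f (y + m) - f y = smul k (Phi m)" "k \<noteq> 0"
    using null_step_parallel[OF Qm mnz] by blast
  show ?thesis using null_hyperplane_preserved_at[OF Qm mnz, of x y] k by (simp add: minner_smul_right)
qed

text \<open>A null step u is mapped to the same vector from a and from b when b - a lies
  in a null hyperplane orthogonal to a null m with minner u m \<noteq> 0: both images
  are multiples of Phi u, and their difference is orthogonal to Phi m.\<close>

lemma null_step_transport:
  assumes Qu: "msq u = 0" and unz: "u \<noteq> 0" and Qm: "msq m = 0" and mnz: "m \<noteq> 0"
    and ab: "minner (b - a) m = 0" and um: "minner u m \<noteq> 0"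
  shows "f (b + u) - f b = f (a + u) - f a"
proof -
  obtain ka where ka: "f (a + u) - f a = smul ka (Phi u)" using null_step_parallel[OF Qu unz] by blast
  obtain kb where kb: "f (b + u) - f b = smul kb (Phi u)" using null_step_parallel[OF Qu unz] by blast
  have "minner (f (b + u) - f (a + u)) (Phi m) = 0"
    using null_hyperplane_Phi[OF Qm mnz, of "b + u" "a + u"] ab by simp
  moreover have "minner (f b - f a) (Phi m) = 0" using null_hyperplane_Phi[OF Qm mnz, of b a] ab by simp
  moreover have "(f (b + u) - f b) - (f (a + u) - f a) = (f (b + u) - f (a + u)) - (f b - f a)" by simp
  ultimately have "minner ((f (b + u) - f b) - (f (a + u) - f a)) (Phi m) = 0"
    by (simp add: minner_diff_left)
  then have "(kb - ka) * minner (Phi u) (Phi m) = 0"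
    using ka kb by (simp add: minner_diff_left minner_smul_left algebra_simps)
  moreover have "minner (Phi u) (Phi m) \<noteq> 0"
    using null_hyperplane_Phi[OF Qm mnz, of u 0] um by (simp add: Phi_def)
  ultimately have "ka = kb" by simp
  with ka kb show ?thesis by simp
qed

text \<open>Every point a reaches 0 in two such transports (first along the hyperplane
  orthogonal to m2, then along the one orthogonal to m1), so f translates by Phi u
  along any null vector u.\<close>

lemma null_step_translation_pair:
  assumes Qu: "msq u = 0" and unz: "u \<noteq> 0"
    and Q1: "msq m1 = 0" "m1 \<noteq> 0" and Q2: "msq m2 = 0" "m2 \<noteq> 0"
    and m12: "minner m1 m2 \<noteq> 0" and u1: "minner u m1 \<noteq> 0" and u2: "minner u m2 \<noteq> 0"
  shows "f (a + u) = f a + Phi u"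
proof -
  define b where "b = smul (minner a m2 / minner m1 m2) m1"
  have "minner (b - 0) m1 = 0" using Q1 by (simp add: b_def minner_smul_left msq_def)
  then have "f (b + u) - f b = f (0 + u) - f 0" using null_step_transport[OF Qu unz Q1 _ u1] by blast
  moreover have "minner (a - b) m2 = 0" using m12 by (simp add: b_def minner_diff_left minner_smul_left)
  then have "f (a + u) - f a = f (b + u) - f b" using null_step_transport[OF Qu unz Q2 _ u2] by blast
  ultimately have "f (a + u) - f a = Phi u" by (simp add: Phi_def)
  then show ?thesis by (metis add.commute diff_add_cancel)
qed

lemma null_step_translation:
  assumes Qu: "msq u = 0"
  shows "f (a + u) = f a + Phi u"
proof (cases "u = 0")
  case True then show ?thesis by simp
next
  case False
  have basis_nonorth: "minner n1 n2 \<noteq> 0" "minner n1 n3 \<noteq> 0" "minner n2 n3 \<noteq> 0"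
    by (simp_all add: minner_def n1_def n2_def n3_def)
  from null_nonorthogonal_pair[OF Qu False] show ?thesis
    using null_step_translation_pair[OF Qu False null_basis(2,6,3,7) basis_nonorth(3)]
      null_step_translation_pair[OF Qu False null_basis(1,5,3,7) basis_nonorth(2)]
      null_step_translation_pair[OF Qu False null_basis(1,5,2,6) basis_nonorth(1)]
    by blast
qed

text \<open>Additivity of Phi: decompose x into four null vectors and translate step by step.\<close>

lemma null_steps_translation:
  assumes "msq s1 = 0" "msq s2 = 0" "msq s3 = 0" "msq s4 = 0"
  shows "f (a + (s1 + s2 + s3 + s4)) = f a + (Phi s1 + Phi s2 + Phi s3 + Phi s4)"
proof -
  have "f (a + (s1 + s2 + s3 + s4)) = f (((a + s1) + s2) + s3) + Phi s4"
    using null_step_translation[OF assms(4), of "a + s1 + s2 + s3"] by (simp add: add.assoc)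
  also have "\<dots> = f (a + s1) + Phi s2 + Phi s3 + Phi s4"
    using null_step_translation[OF assms(2), of "a + s1"] null_step_translation[OF assms(3), of "a + s1 + s2"]
    by simp
  also have "\<dots> = f a + (Phi s1 + Phi s2 + Phi s3 + Phi s4)"
    using null_step_translation[OF assms(1), of a] by (simp add: add.assoc)
  finally show ?thesis .
qed

lemma f_translate: "f (a + x) = f a + Phi x"
proof -
  define S where "S = Phi (smul (nb1 x) n1) + Phi (smul (nb2 x) n2) + Phi (smul (c2 x) n3) + Phi (smul (c3 x) n4)"
  have "f (b + x) = f b + S" for b
    using null_steps_translation[OF msq_smul_null_basis, of b] null_basis_decomp[of x]
    unfolding S_def by metis
  from this[of a] this[of 0] show ?thesis by (simp add: Phi_def)
qed

lemma Phi_add: "Phi (a + x) = Phi a + Phi x"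
  by (simp add: Phi_def f_translate)

lemma Phi_diff: "Phi (x - y) = Phi x - Phi y"
  using Phi_add[of "x - y" y] by simp

definition nscale :: "'a v4 \<Rightarrow> 'a \<Rightarrow> 'a" where
  "nscale p t = (SOME s. Phi (smul t p) = smul s (Phi p))"

lemma Phi_smul_null:
  assumes Qp: "msq p = 0" and pnz: "p \<noteq> 0"
  shows "Phi (smul t p) = smul (nscale p t) (Phi p)"
proof -
  have "minner (smul t p - 0) p = 0" using Qp by (simp add: minner_smul_left msq_def)
  then have "minner (Phi (smul t p)) (Phi p) = 0"
    using null_hyperplane_Phi[OF Qp pnz, of "smul t p" 0] by (simp add: Phi_def)
  moreover have "msq (Phi (smul t p)) = 0" using Phi_null Qp by (simp add: msq_smul)
  ultimately have "\<exists>s. Phi (smul t p) = smul s (Phi p)"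
    using null_orthogonal_parallel[OF Phi_null[OF Qp] _ _ Phi_nonzero[OF pnz]] by (simp add: minner_sym)
  then show ?thesis unfolding nscale_def by (rule someI_ex)
qed

lemma nscale_add:
  assumes Qp: "msq p = 0" and pnz: "p \<noteq> 0"
  shows "nscale p (s + t) = nscale p s + nscale p t"
proof -
  have "smul (nscale p (s + t)) (Phi p) = Phi (smul (s + t) p)"
    by (rule Phi_smul_null[OF Qp pnz, symmetric])
  also have "\<dots> = Phi (smul s p) + Phi (smul t p)" by (simp add: smul_add_left Phi_add)
  also have "\<dots> = smul (nscale p s + nscale p t) (Phi p)"
    by (simp add: Phi_smul_null[OF Qp pnz] smul_add_left)
  finally have "smul (nscale p (s + t)) (Phi p) = smul (nscale p s + nscale p t) (Phi p)" .
  then show ?thesis using smul_cancel Phi_nonzero[OF pnz] by blast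
qed

lemma nscale_one:
  assumes Qp: "msq p = 0" and pnz: "p \<noteq> 0"
  shows "nscale p 1 = 1"
  using Phi_smul_null[OF Qp pnz, of 1] smul_cancel[OF Phi_nonzero[OF pnz], of 1 "nscale p 1"] by simp

text \<open>Relating the scale factors of two null directions p, q through a third null
  vector m: t p - \<mu> t q lies in the null hyperplane orthogonal to m, and so does its
  image under Phi.\<close>

lemma nscale_link:
  assumes Qp: "msq p = 0" and pnz: "p \<noteq> 0" and Qq: "msq q = 0" and qnz: "q \<noteq> 0"
    and Qm: "msq m = 0" and mnz: "m \<noteq> 0" and qm: "minner q m \<noteq> 0"
    and pm: "minner p m = \<mu> * minner q m"
  shows "nscale p t * nscale q \<mu> = nscale q (\<mu> * t)"
proof -
  have E: "nscale p t * minner (Phi p) (Phi m) = nscale q (\<mu> * t) * minner (Phi q) (Phi m)" for t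
  proof -
    define x where "x = smul t p - smul (\<mu> * t) q"
    have "minner (x - 0) m = 0" using pm by (simp add: x_def minner_diff_left minner_smul_left)
    then have "minner (Phi x) (Phi m) = 0"
      using null_hyperplane_Phi[OF Qm mnz, of x 0] by (simp add: Phi_def)
    moreover have "Phi x = smul (nscale p t) (Phi p) - smul (nscale q (\<mu> * t)) (Phi q)"
      by (simp add: x_def Phi_diff Phi_smul_null[OF Qp pnz] Phi_smul_null[OF Qq qnz])
    ultimately show ?thesis by (simp add: minner_diff_left minner_smul_left)
  qed
  have K: "minner (Phi q) (Phi m) \<noteq> 0"
    using null_hyperplane_Phi[OF Qm mnz, of q 0] qm by (simp add: Phi_def)
  have "minner (Phi p) (Phi m) = nscale q \<mu> * minner (Phi q) (Phi m)"
    using E[of 1] nscale_one[OF Qp pnz] by simp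
  then have "nscale p t * nscale q \<mu> * minner (Phi q) (Phi m) = nscale q (\<mu> * t) * minner (Phi q) (Phi m)"
    using E[of t] by (simp add: algebra_simps)
  with K show ?thesis by simp
qed

definition aut :: "'a \<Rightarrow> 'a" where
  "aut t = nscale n1 t"

lemma aut_add: "aut (s + t) = aut s + aut t" unfolding aut_def using nscale_add null_basis by blast
lemma aut_one: "aut 1 = 1" unfolding aut_def using nscale_one null_basis by blast
lemma aut_diff: "aut (s - t) = aut s - aut t" using aut_add[of "s - t" t] by simp

lemma nscale_n2: "nscale n2 t = aut t"
proof -
  have "nscale n2 t * nscale n1 1 = nscale n1 (1 * t)"
    by (rule nscale_link[OF null_basis(2,6,1,5,3,7)]) (simp_all add: minner_def n1_def n2_def n3_def)
  then show ?thesis using aut_one by (simp add: aut_def)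
qed

lemma nscale_n3: "nscale n3 t = aut t"
proof -
  have "nscale n3 t * nscale n1 1 = nscale n1 (1 * t)"
    by (rule nscale_link[OF null_basis(3,7,1,5), where m = "V 2 2 1 3"])
       (simp_all add: minner_def msq_def n1_def n3_def v4_eq_iff)
  then show ?thesis using aut_one by (simp add: aut_def)
qed

lemma nscale_n4: "nscale n4 t = aut t"
proof -
  have "nscale n4 t * nscale n1 1 = nscale n1 (1 * t)"
    by (rule nscale_link[OF null_basis(4,8,1,5), where m = "V 2 1 2 3"])
       (simp_all add: minner_def msq_def n1_def n4_def v4_eq_iff)
  then show ?thesis using aut_one by (simp add: aut_def)
qed

text \<open>Multiplicativity, first for squares using the null vector
  ((1 - s^2)/2, s, 0, (1 + s^2)/2), then in general since r = A^2 - B^2.\<close>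

lemma aut_square_mult: "aut (s^2 * t) = aut (s^2) * aut t"
proof -
  define m :: "'a v4" where "m = V ((1 - s^2)/2) s 0 ((1 + s^2)/2)"
  have Qm: "msq m = 0" by (simp add: m_def msq_def minner_def field_simps power2_eq_square)
  have "c4 m > 0" by (simp add: m_def add_pos_nonneg)
  then have mnz: "m \<noteq> 0" by auto
  have "nscale n1 t * nscale n2 (s^2) = nscale n2 (s^2 * t)"
    by (rule nscale_link[OF null_basis(1,5,2,6) Qm mnz])
       (simp_all add: minner_def m_def n1_def n2_def field_simps)
  then show ?thesis by (simp add: nscale_n2 aut_def mult.commute)
qed

lemma aut_mult: "aut (r * t) = aut r * aut t"
proof -
  define A where "A = (r + 1) / 2"
  define B where "B = (r - 1) / 2"
  have r: "r = A^2 - B^2" by (simp add: A_def B_def field_simps power2_eq_square)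
  have "aut (r * t) = aut (A^2 * t - B^2 * t)" by (simp add: r algebra_simps)
  also have "\<dots> = (aut (A^2) - aut (B^2)) * aut t"
    using aut_square_mult[of A t] aut_square_mult[of B t] by (simp add: aut_diff algebra_simps)
  also have "\<dots> = aut r * aut t" by (simp add: r aut_diff)
  finally show ?thesis .
qed

lemma Phi_null_basis_decomp:
  "Phi x = smul (aut (nb1 x)) (Phi n1) + smul (aut (nb2 x)) (Phi n2)
         + smul (aut (c2 x)) (Phi n3) + smul (aut (c3 x)) (Phi n4)"
proof -
  have "Phi x = Phi (smul (nb1 x) n1 + smul (nb2 x) n2 + smul (c2 x) n3 + smul (c3 x) n4)"
    using null_basis_decomp by metis
  then show ?thesis
    by (simp add: Phi_add Phi_smul_null[OF null_basis(1,5)] Phi_smul_null[OF null_basis(2,6)]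
       Phi_smul_null[OF null_basis(3,7)] Phi_smul_null[OF null_basis(4,8)]
       nscale_n2 nscale_n3 nscale_n4 aut_def[symmetric])
qed

lemma Phi_semilinear: "Phi (smul s x) = smul (aut s) (Phi x)"
proof -
  have "nb1 (smul s x) = s * nb1 x" "nb2 (smul s x) = s * nb2 x"
    by (simp_all add: nb1_def nb2_def algebra_simps)
  then show ?thesis
    by (simp add: Phi_null_basis_decomp[of "smul s x"] Phi_null_basis_decomp[of x] aut_mult
        smul_add_right smul_smul)
qed

text \<open>aut is onto: the preimage of f 0 + r Phi n1 lies on the null line through 0 and n1.\<close>

lemma aut_surj: "\<exists>t. aut t = r"
proof -
  obtain z where z: "f z = f 0 + smul r (Phi n1)" using surj by metis
  have QP: "msq (Phi n1) = 0" using Phi_null null_basis by blast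
  have "lightlike (f z) (f 0)" using z QP by (simp add: lightlike_def msq_smul)
  then have Qz: "msq z = 0" using lightlike_image by (simp add: lightlike_def)
  have "f z - f n1 = smul (r - 1) (Phi n1)" using z by (simp add: Phi_def smul_diff_left algebra_simps)
  then have "lightlike (f z) (f n1)" using QP by (simp add: lightlike_def msq_smul)
  then have "msq (z - n1) = 0" using lightlike_image by (simp add: lightlike_def)
  then have "minner z n1 = 0" using Qz msq_diff[of z n1] by (simp add: null_basis)
  then have "minner n1 z = 0" by (simp add: minner_sym)
  then obtain t where t: "z = smul t n1"
    using null_orthogonal_parallel[OF null_basis(1) Qz _ null_basis(5)] by blast
  have "smul (aut t) (Phi n1) = smul r (Phi n1)"
    using z t Phi_smul_null[OF null_basis(1,5), of t] by (simp add: Phi_def aut_def)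
  then show ?thesis using smul_cancel[OF Phi_nonzero[OF null_basis(5)]] by blast
qed

text \<open>A spatial vector w (c4 w = 0, msq w > 0) whose image is again spatial, so
  that simultaneous_msq applies to w and its multiples.\<close>

lemma spatial_witness: "\<exists>w. c4 w = 0 \<and> c4 (Phi w) = 0 \<and> msq w > 0"
proof (cases "c4 (Phi (V 0 1 0 0)) = 0")
  case True
  then show ?thesis by (intro exI[of _ "V 0 1 0 0"]) (simp add: msq_def minner_def)
next
  case False
  obtain b where b: "aut b = - c4 (Phi (V 1 0 0 0)) / c4 (Phi (V 0 1 0 0))" using aut_surj by blast
  define w :: "'a v4" where "w = V 1 0 0 0 + smul b (V 0 1 0 0)"
  have "Phi w = Phi (V 1 0 0 0) + smul (aut b) (Phi (V 0 1 0 0))" by (simp add: w_def Phi_add Phi_semilinear)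
  then have "c4 (Phi w) = 0" using False b by simp
  moreover have "msq w = 1 + b^2" by (simp add: w_def msq_def minner_def power2_eq_square)
  then have "msq w > 0" by (simp add: add_pos_nonneg)
  moreover have "c4 w = 0" by (simp add: w_def)
  ultimately show ?thesis by blast
qed

lemma spatial_msq: "c4 w = 0 \<Longrightarrow> c4 (Phi w) = 0 \<Longrightarrow> msq (Phi w) = msq w"
  using simultaneous_msq[of w 0] by (simp add: Phi_def)

text \<open>Preservation of simultaneous distances forces (aut s)^2 = s^2, and an additive
  map with this property fixing 1 is the identity.\<close>

lemma aut_square: "(aut s)^2 = s^2"
proof -
  obtain w where w: "c4 w = 0" "c4 (Phi w) = 0" "msq w > 0" using spatial_witness by blast
  have "c4 (smul s w) = 0" "c4 (Phi (smul s w)) = 0" using w by (simp_all add: Phi_semilinear)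
  then have "msq (Phi (smul s w)) = msq (smul s w)" by (rule spatial_msq)
  then have "(aut s)^2 * msq (Phi w) = s^2 * msq w" by (simp add: Phi_semilinear msq_smul)
  moreover have "msq (Phi w) = msq w" using w spatial_msq by blast
  ultimately show ?thesis using w(3) by simp
qed

lemma aut_id: "aut s = s"
proof -
  have "aut s = s \<or> aut s = - s" using aut_square[of s] by (simp add: power2_eq_iff)
  moreover have "aut (s + 1) = s + 1 \<or> aut (s + 1) = - (s + 1)"
    using aut_square[of "s + 1"] by (simp add: power2_eq_iff)
  moreover have "aut (s + 1) = aut s + 1" by (simp add: aut_add aut_one)
  ultimately show ?thesis by (auto simp: algebra_simps)
qed

lemma Phi_linear:
  "Phi x = smul (c1 x) (Phi (V 1 0 0 0)) + smul (c2 x) (Phi (V 0 1 0 0))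
         + smul (c3 x) (Phi (V 0 0 1 0)) + smul (c4 x) (Phi (V 0 0 0 1))"
proof -
  have "x = smul (c1 x) (V 1 0 0 0) + smul (c2 x) (V 0 1 0 0) + smul (c3 x) (V 0 0 1 0) + smul (c4 x) (V 0 0 0 1)"
    by (simp add: v4_eq_iff)
  then have "Phi x = Phi (smul (c1 x) (V 1 0 0 0) + smul (c2 x) (V 0 1 0 0)
                        + smul (c3 x) (V 0 0 1 0) + smul (c4 x) (V 0 0 0 1))"
    by metis
  then show ?thesis by (simp add: Phi_add Phi_semilinear aut_id)
qed

text \<open>Phi is linear and preserves the light cone, hence conformal; the conformal
  factor is 1 because Phi preserves msq of the spatial witness.\<close>

lemma Phi_msq: "msq (Phi x) = msq x"
proof -
  have conformal: "msq (Phi x) = msq (Phi (V 1 0 0 0)) * msq x" for x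
    using linear_null_preserving_conformal[OF Phi_linear Phi_null] .
  obtain w where w: "c4 w = 0" "c4 (Phi w) = 0" "msq w > 0" using spatial_witness by blast
  have "msq (Phi (V 1 0 0 0)) * msq w = msq w" using conformal[of w] spatial_msq[OF w(1,2)] by simp
  then have "msq (Phi (V 1 0 0 0)) = 1" using w(3) by simp
  then show ?thesis using conformal[of x] by simp
qed

theorem msq_preserved: "msq (f x - f y) = msq (x - y)"
  using Phi_msq[of "x - y"] unfolding Phi_diff by (simp add: Phi_def)

end

section \<open>World-view transformations in SpecRel\<close>

definition Wv :: "('b \<Rightarrow> 'b \<Rightarrow> 'q \<Rightarrow> 'q \<Rightarrow> 'q \<Rightarrow> 'q \<Rightarrow> bool) \<Rightarrow> 'b \<Rightarrow> 'b \<Rightarrow> 'q v4 \<Rightarrow> bool" where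
  "Wv W ob b x = W ob b (c1 x) (c2 x) (c3 x) (c4 x)"

definition coincide :: "('b \<Rightarrow> 'b \<Rightarrow> 'q \<Rightarrow> 'q \<Rightarrow> 'q \<Rightarrow> 'q \<Rightarrow> bool) \<Rightarrow> 'b \<Rightarrow> 'b \<Rightarrow> 'q v4 \<Rightarrow> 'q v4 \<Rightarrow> bool"
  where "coincide W ob ob' x x' \<longleftrightarrow> (\<forall>b. Wv W ob b x \<longleftrightarrow> Wv W ob' b x')"

lemma AxPh_lightlike:
  assumes "AxPh IB Ph W" "IOb IB W ob"
  shows "(\<exists>p. Ph p \<and> Wv W ob p x \<and> Wv W ob p y) \<longleftrightarrow> lightlike x y"
  using assms unfolding AxPh_def Wv_def lightlike_iff by blast

text \<open>By AxPh and lightlike_separates, an inertial observer's events are determined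
  by the bodies present at them.\<close>

lemma event_determined:
  assumes "AxPh IB Ph W" "IOb IB W ob" "coincide W ob ob x y"
  shows "x = y"
proof (rule ccontr)
  assume "x \<noteq> y"
  then obtain z where z: "lightlike x z" "\<not> lightlike y z" using lightlike_separates by blast
  then obtain p where "Ph p" "Wv W ob p x" "Wv W ob p z" using AxPh_lightlike[OF assms(1,2)] by blast
  then have "Ph p \<and> Wv W ob p y \<and> Wv W ob p z" using assms(3) by (simp add: coincide_def)
  then have "lightlike y z" using AxPh_lightlike[OF assms(1,2)] by blast
  with z show False by simp
qed

lemma coincide_exists:
  assumes "AxEv IB W" "IOb IB W ob" "IOb IB W ob'"
  shows "\<exists>x'. coincide W ob ob' x x'"
proof -
  obtain x1' x2' x3' x4' where "\<forall>b. W ob b (c1 x) (c2 x) (c3 x) (c4 x) \<longleftrightarrow> W ob' b x1' x2' x3' x4'"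
    using assms(1)[unfolded AxEv_def, rule_format, of ob ob' "c1 x" "c2 x" "c3 x" "c4 x"] assms(2,3) by blast
  then have "coincide W ob ob' x (V x1' x2' x3' x4')" by (simp add: coincide_def Wv_def)
  then show ?thesis by blast
qed

lemma coincide_lightlike:
  assumes "AxPh IB Ph W" "IOb IB W ob" "IOb IB W ob'"
    and "coincide W ob ob' x x'" "coincide W ob ob' y y'"
  shows "lightlike x' y' \<longleftrightarrow> lightlike x y"
  using AxPh_lightlike[OF assms(1,2), of x y] AxPh_lightlike[OF assms(1,3), of x' y'] assms(4,5)
  unfolding coincide_def by blast

lemma coincide_simultaneous:
  assumes "AxSymd IB W" "IOb IB W ob" "IOb IB W ob'" "c4 x = c4 y" "c4 x' = c4 y'"
    and "coincide W ob ob' x x'" "coincide W ob ob' y y'"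
  shows "msq (x' - y') = msq (x - y)"
proof -
  have "(c1 x - c1 y)^2 + (c2 x - c2 y)^2 + (c3 x - c3 y)^2 =
        (c1 x' - c1 y')^2 + (c2 x' - c2 y')^2 + (c3 x' - c3 y')^2"
    by (rule assms(1)[unfolded AxSymd_def, rule_format])
      (insert assms(2-), unfold coincide_def Wv_def, blast)
  then show ?thesis using assms(4,5) by (simp add: msq_def minner_def power2_eq_square)
qed

lemma worldview_transformation:
  fixes W :: "'b \<Rightarrow> 'b \<Rightarrow> 'q::linordered_field \<Rightarrow> 'q \<Rightarrow> 'q \<Rightarrow> 'q \<Rightarrow> bool"
  assumes S: "SpecRel IB Ph W" and o1: "IOb IB W ob" and o2: "IOb IB W ob'"
  shows "\<exists>f. worldview_map f \<and> (\<forall>x x'. coincide W ob ob' x x' \<longrightarrow> x' = f x)"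
proof -
  have Ph: "AxPh IB Ph W" and Ev: "AxEv IB W" and Sy: "AxSymd IB W" using S by (simp_all add: SpecRel_def)
  define f where "f x = (SOME x'. coincide W ob ob' x x')" for x
  have f: "coincide W ob ob' x (f x)" for x
    unfolding f_def using coincide_exists[OF Ev o1 o2] by (rule someI_ex)
  have f_unique: "x' = f x" if "coincide W ob ob' x x'" for x x'
    using event_determined[OF Ph o2] that f[of x] by (simp add: coincide_def)
  have "worldview_map f"
  proof
    fix x y
    assume "f x = f y"
    then show "x = y" using event_determined[OF Ph o1] f[of x] f[of y] by (simp add: coincide_def)
  next
    fix y
    obtain z where "coincide W ob' ob y z" using coincide_exists[OF Ev o2 o1] by blast
    then have "coincide W ob ob' z y" by (auto simp: coincide_def)
    then show "\<exists>x. f x = y" using f_unique by metis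
  next
    fix x y
    show "lightlike (f x) (f y) \<longleftrightarrow> lightlike x y" using coincide_lightlike[OF Ph o1 o2 f f] .
  next
    fix x y
    assume "c4 x = c4 y" "c4 (f x) = c4 (f y)"
    then show "msq (f x - f y) = msq (x - y)" using coincide_simultaneous[OF Sy o1 o2 _ _ f f] by blast
  qed
  with f_unique show ?thesis by blast
qed

lemma mu_msq: "mu x1 x2 x3 x4 y1 y2 y3 y4 = msq (V x1 x2 x3 x4 - V y1 y2 y3 y4)"
  by (simp add: mu_def msq_def minner_def power2_eq_square)

theorem theorem2:
  fixes IB Ph :: "'b \<Rightarrow> bool"
    and W :: "'b \<Rightarrow> 'b \<Rightarrow> 'q::linordered_field \<Rightarrow> 'q \<Rightarrow> 'q \<Rightarrow> 'q \<Rightarrow> bool"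
  assumes "SpecRel IB Ph W"
  shows "\<forall>ob ob' x1 x2 x3 x4 x1' x2' x3' x4' y1 y2 y3 y4 y1' y2' y3' y4'.
     IOb IB W ob \<and> IOb IB W ob' \<and>
     (\<forall>b. W ob b x1 x2 x3 x4 \<longleftrightarrow> W ob' b x1' x2' x3' x4') \<and>
     (\<forall>b. W ob b y1 y2 y3 y4 \<longleftrightarrow> W ob' b y1' y2' y3' y4') \<longrightarrow>
     mu x1 x2 x3 x4 y1 y2 y3 y4 = mu x1' x2' x3' x4' y1' y2' y3' y4'"
proof (intro allI impI)
  fix ob ob' x1 x2 x3 x4 x1' x2' x3' x4' y1 y2 y3 y4 y1' y2' y3' y4'
  assume H: "IOb IB W ob \<and> IOb IB W ob' \<and>
     (\<forall>b. W ob b x1 x2 x3 x4 \<longleftrightarrow> W ob' b x1' x2' x3' x4') \<and>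
     (\<forall>b. W ob b y1 y2 y3 y4 \<longleftrightarrow> W ob' b y1' y2' y3' y4')"
  then have o1: "IOb IB W ob" and o2: "IOb IB W ob'"
    and x: "coincide W ob ob' (V x1 x2 x3 x4) (V x1' x2' x3' x4')"
    and y: "coincide W ob ob' (V y1 y2 y3 y4) (V y1' y2' y3' y4')"
    by (simp_all add: coincide_def Wv_def)
  obtain f where f: "worldview_map f" and f_graph: "\<forall>x x'. coincide W ob ob' x x' \<longrightarrow> x' = f x"
    using worldview_transformation[OF assms o1 o2] by blast
  have "mu x1' x2' x3' x4' y1' y2' y3' y4' = msq (f (V x1 x2 x3 x4) - f (V y1 y2 y3 y4))"
    using f_graph x y by (simp add: mu_msq)
  then show "mu x1 x2 x3 x4 y1 y2 y3 y4 = mu x1' x2' x3' x4' y1' y2' y3' y4'"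
    by (simp add: mu_msq worldview_map.msq_preserved[OF f])
qed

end
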